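(* Let $k\ge3$ and let $D\subseteq\mathbb{D}$ be an open set with the $k$-th Hindmarsh property. If $\mathcal{Z}\subset D$ is a discrete set in $D$, then $D\setminus\mathcal{Z}$ also has the $k$-th Hindmarsh property.
   Context: $\mathbb{D}$ is the open unit disk. A set $\mathcal{Z}\subset D$ is discrete in $D$ if it is at most countable with no accumulation points in $D$. A Schur function is an analytic $S:\mathbb{D}\to\mathbb{C}$ with $|S|\le1$. Pick matrix: $P_k(f;z_1,\dots,z_k)=\left[\frac{1-f(z_i)\overline{f(z_j)}}{1-z_i\overline{z_j}}\right]_{i,j=1}^k$. For an integer $k\ge3$, an open set $D\subseteq\mathbb{D}$ has the $k$-th Hindmarsh property if every function $f:D\to\mathbb{C}$ such that $P_k(f;z_1,\dots,z_k)$ is positive semidefinite for every choice of distinct $z_1,\dots,z_k\in D$ admits an extension to a Schur function on $\mathbb{D}$. Hindmarsh's theorem (may be assumed): if $U\subseteq\mathbb{D}$ is open and $f:U\to\mathbb{C}$ has $P_3(f;z_1,z_2,z_3)\ge0$ for all $z_1,z_2,z_3\in U$, then $f$ is analytic on $U$ with $|f|\le1$. *)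

theory Defs
  imports "HOL-Analysis.Analysis"
begin

definition pick_entry :: "(complex \<Rightarrow> complex) \<Rightarrow> (nat \<Rightarrow> complex) \<Rightarrow> nat \<Rightarrow> nat \<Rightarrow> complex" where
  "pick_entry f z i j = (1 - f (z i) * cnj (f (z j))) / (1 - z i * cnj (z j))"

definition psd_matrix :: "nat \<Rightarrow> (nat \<Rightarrow> nat \<Rightarrow> complex) \<Rightarrow> bool" where
  "psd_matrix k M \<longleftrightarrow>
     (\<forall>i<k. \<forall>j<k. M j i = cnj (M i j)) \<and>
     (\<forall>c :: nat \<Rightarrow> complex. 0 \<le> (\<Sum>i<k. \<Sum>j<k. cnj (c i) * M i j * c j))"

definition schur_function :: "(complex \<Rightarrow> complex) \<Rightarrow> bool" where
  "schur_function S \<longleftrightarrow> S holomorphic_on ball 0 1 \<and> (\<forall>z\<in>ball 0 1. norm (S z) \<le> 1)"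

definition hindmarsh_property :: "nat \<Rightarrow> complex set \<Rightarrow> bool" where
  "hindmarsh_property k D \<longleftrightarrow>
     (\<forall>f :: complex \<Rightarrow> complex.
        (\<forall>z :: nat \<Rightarrow> complex. inj_on z {..<k} \<and> z ` {..<k} \<subseteq> D \<longrightarrow>
            psd_matrix k (pick_entry f z))
        \<longrightarrow> (\<exists>S. schur_function S \<and> (\<forall>w\<in>D. S w = f w)))"

definition discrete_in :: "complex set \<Rightarrow> complex set \<Rightarrow> bool" where
  "discrete_in Z D \<longleftrightarrow> countable Z \<and> (\<forall>w\<in>D. \<not> (w islimpt Z))"

end

theory Submission
  imports Defs
begin

text \<open>Pick positivity on \<open>D - Z\<close> already bounds \<open>f\<close> by 1 there, through the diagonal
  entries \<open>(1 - |f z|\<^sup>2) / (1 - |z|\<^sup>2)\<close>. Each point of \<open>Z\<close> is approached from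
  \<open>D - Z\<close>, and along a suitable sequence the bounded values of \<open>f\<close> converge; extend \<open>f\<close> to
  \<open>Z\<close> by these limits. The Pick matrices of the extension at distinct points of \<open>D\<close> are
  limits of Pick matrices of \<open>f\<close> at eventually distinct points of \<open>D - Z\<close>, hence positive
  semidefinite, and the property of \<open>D\<close> yields a Schur function extending it.\<close>

definition pick_psd_on :: "nat \<Rightarrow> complex set \<Rightarrow> (complex \<Rightarrow> complex) \<Rightarrow> bool" where
  "pick_psd_on k D f \<longleftrightarrow>
     (\<forall>z. inj_on z {..<k} \<and> z ` {..<k} \<subseteq> D \<longrightarrow> psd_matrix k (pick_entry f z))"

lemma hindmarsh_property_iff:
  "hindmarsh_property k D \<longleftrightarrow>
     (\<forall>f. pick_psd_on k D f \<longrightarrow> (\<exists>S. schur_function S \<and> (\<forall>w\<in>D. S w = f w)))"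
  by (simp add: hindmarsh_property_def pick_psd_on_def)

lemma pick_entry_diag:
  "pick_entry f z i i = of_real ((1 - (norm (f (z i)))\<^sup>2) / (1 - (norm (z i))\<^sup>2))"
  by (simp add: pick_entry_def complex_norm_square[symmetric])

lemma pick_denominator_nonzero:
  fixes a b :: complex
  assumes "norm a < 1" "norm b < 1"
  shows "1 - a * cnj b \<noteq> 0"
proof -
  have "norm a * norm b < 1 * 1"
    using assms by (intro mult_strict_mono) auto
  then have "norm (a * cnj b) \<noteq> 1"
    by (simp add: norm_mult)
  then show ?thesis
    by auto
qed

lemma psd_matrix_hermitian:
  assumes "psd_matrix k M" "i < k" "j < k"
  shows "M j i = cnj (M i j)"
  using assms unfolding psd_matrix_def by blast

lemma psd_matrix_form_nonneg:
  assumes "psd_matrix k M"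
  shows "0 \<le> (\<Sum>i<k. \<Sum>j<k. cnj (c i) * M i j * c j)"
  using assms unfolding psd_matrix_def by blast

lemma psd_matrix_diag_nonneg:
  assumes "psd_matrix k M" "i < k"
  shows "0 \<le> M i i"
proof -
  define c :: "nat \<Rightarrow> complex" where "c j = (if j = i then 1 else 0)" for j
  have "0 \<le> (\<Sum>l<k. \<Sum>j<k. cnj (c l) * M l j * c j)"
    using assms(1) by (rule psd_matrix_form_nonneg)
  also have "\<dots> = M i i"
    using assms(2) by (simp add: c_def if_distrib[of "\<lambda>x. _ * x"] if_distrib[of "\<lambda>x. cnj x * _"]
        cong: if_cong)
  finally show ?thesis .
qed

lemma psd_matrix_limit:
  assumes "F \<noteq> bot" "eventually (\<lambda>n. psd_matrix k (M n)) F"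
    and "\<And>i j. i < k \<Longrightarrow> j < k \<Longrightarrow> ((\<lambda>n. M n i j) \<longlongrightarrow> L i j) F"
  shows "psd_matrix k L"
proof -
  have "L j i = cnj (L i j)" if "i < k" "j < k" for i j
  proof -
    have "eventually (\<lambda>n. cnj (M n i j) = M n j i) F"
      using assms(2) by (rule eventually_mono) (simp add: psd_matrix_hermitian[OF _ that])
    with tendsto_cnj[OF assms(3)[OF that]] have "((\<lambda>n. M n j i) \<longlongrightarrow> cnj (L i j)) F"
      by (rule Lim_transform_eventually)
    then show ?thesis
      by (rule tendsto_unique[OF assms(1) assms(3)[OF that(2,1)]])
  qed
  moreover have "0 \<le> (\<Sum>i<k. \<Sum>j<k. cnj (c i) * L i j * c j)" for c
  proof -
    let ?form = "\<lambda>A. \<Sum>i<k. \<Sum>j<k. cnj (c i) * A i j * c j"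
    let ?nonneg = "{x :: complex. 0 \<le> Re x \<and> Im x = 0}"
    have closed: "closed ?nonneg"
      by (intro closed_Collect_conj closed_Collect_le closed_Collect_eq continuous_intros)
    have eventually_nonneg: "eventually (\<lambda>n. ?form (M n) \<in> ?nonneg) F"
      using assms(2) by (rule eventually_mono) (use psd_matrix_form_nonneg in \<open>simp add: less_eq_complex_def\<close>)
    have "((\<lambda>n. ?form (M n)) \<longlongrightarrow> ?form L) F"
      by (intro tendsto_sum tendsto_mult_left tendsto_mult_right) (auto intro: assms(3))
    then have "?form L \<in> ?nonneg"
      by (rule Lim_in_closed_set[OF closed eventually_nonneg assms(1)])
    then show ?thesis
      by (simp add: less_eq_complex_def)
  qed
  ultimately show ?thesis
    unfolding psd_matrix_def by blast
qed

lemma eventually_inj_on_tendsto: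
  fixes z :: "'i \<Rightarrow> 'a::t2_space"
  assumes "finite A" "inj_on z A" "\<And>i. i \<in> A \<Longrightarrow> ((\<lambda>n. t n i) \<longlongrightarrow> z i) F"
  shows "eventually (\<lambda>n. inj_on (t n) A) F"
proof -
  have "eventually (\<lambda>n. t n i \<noteq> t n j) F" if "i \<in> A" "j \<in> A" "i \<noteq> j" for i j
  proof -
    have "((\<lambda>n. (t n i, t n j)) \<longlongrightarrow> (z i, z j)) F"
      using that by (intro tendsto_Pair assms(3))
    moreover have "(z i, z j) \<in> {(x, y) |x y. x \<noteq> y}"
      using assms(2) that by (auto simp: inj_on_def)
    ultimately have "eventually (\<lambda>n. (t n i, t n j) \<in> {(x, y) |x y. x \<noteq> y}) F"
      using open_diagonal_complement topological_tendstoD by blast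
    then show ?thesis by (rule eventually_mono) auto
  qed
  then have "eventually (\<lambda>n. \<forall>i\<in>A. \<forall>j\<in>A. i \<noteq> j \<longrightarrow> t n i \<noteq> t n j) F"
    using assms(1) by (intro eventually_ball_finite ballI) auto
  then show ?thesis by (rule eventually_mono) (auto simp: inj_on_def)
qed

lemma psd_pick_entry_limit:
  assumes "F \<noteq> bot" "eventually (\<lambda>n. psd_matrix k (pick_entry f (t n))) F"
    and "z ` {..<k} \<subseteq> ball 0 1"
    and "\<And>i. i < k \<Longrightarrow> ((\<lambda>n. t n i) \<longlongrightarrow> z i) F"
    and "\<And>i. i < k \<Longrightarrow> ((\<lambda>n. f (t n i)) \<longlongrightarrow> g (z i)) F"
  shows "psd_matrix k (pick_entry g z)"
proof (rule psd_matrix_limit[OF assms(1,2)])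
  fix i j assume "i < k" "j < k"
  then have "1 - z i * cnj (z j) \<noteq> 0"
    using assms(3) by (intro pick_denominator_nonzero) auto
  then show "((\<lambda>n. pick_entry f (t n) i j) \<longlongrightarrow> pick_entry g z i j) F"
    unfolding pick_entry_def using \<open>i < k\<close> \<open>j < k\<close>
    by (intro tendsto_divide tendsto_diff tendsto_mult tendsto_cnj tendsto_const assms(4,5))
qed

lemma exists_inj_points_in_open:
  fixes x :: "'a::{perfect_space, t1_space}"
  assumes "open U" "x \<in> U"
  obtains z :: "nat \<Rightarrow> 'a" where "inj_on z {..<k}" "z ` {..<k} \<subseteq> U" "z 0 = x"
proof -
  have "x islimpt U - {x}"
    using assms open_imp_islimpt islimpt_punctured by blast
  then have "infinite (U - {x})"
    using islimpt_finite by blast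
  then obtain g :: "nat \<Rightarrow> 'a" where "inj g" "range g \<subseteq> U - {x}"
    using infinite_countable_subset by blast
  then have g_ne: "g i \<noteq> x" "x \<noteq> g i" for i
    by blast+
  have "inj_on (\<lambda>i. if i = 0 then x else g i) {..<k}"
  proof (rule inj_onI)
    fix i j assume "(if i = 0 then x else g i) = (if j = 0 then x else g j)"
    then show "i = j"
      by (cases "i = 0"; cases "j = 0") (simp_all add: g_ne inj_eq[OF \<open>inj g\<close>])
  qed
  moreover have "(\<lambda>i. if i = 0 then x else g i) ` {..<k} \<subseteq> U"
    using \<open>range g \<subseteq> U - {x}\<close> assms(2) by auto
  ultimately show ?thesis
    using that by simp
qed

lemma pick_psd_on_imp_norm_le_1:
  assumes "pick_psd_on k U f" "open U" "U \<subseteq> ball 0 1" "k \<ge> 1" "x \<in> U"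
  shows "norm (f x) \<le> 1"
proof -
  obtain z where "inj_on z {..<k}" "z ` {..<k} \<subseteq> U" "z 0 = x"
    using exists_inj_points_in_open assms(2,5) by metis
  then have "0 \<le> pick_entry f z 0 0"
    using assms(1,4) psd_matrix_diag_nonneg unfolding pick_psd_on_def by auto
  then have "0 \<le> complex_of_real ((1 - (norm (f x))\<^sup>2) / (1 - (norm x)\<^sup>2))"
    by (simp only: pick_entry_diag \<open>z 0 = x\<close>)
  then have "0 \<le> (1 - (norm (f x))\<^sup>2) / (1 - (norm x)\<^sup>2)"
    unfolding less_eq_complex_def by simp
  moreover have "(norm x)\<^sup>2 < 1"
    using assms(3,5) by (auto simp: abs_square_less_1)
  ultimately have "(norm (f x))\<^sup>2 \<le> 1"
    by (simp add: zero_le_divide_iff)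
  then show ?thesis by (simp add: abs_square_le_1)
qed

lemma open_Diff_no_limpt:
  assumes "open D" "\<forall>w\<in>D. \<not> w islimpt Z"
  shows "open (D - Z)"
proof -
  have "D - Z = D - closure Z"
    using assms(2) by (auto simp: closure_def)
  then show ?thesis
    using assms(1) by auto
qed

lemma exists_seq_avoiding_with_convergent_image:
  fixes f :: "'a::{first_countable_topology, perfect_space} \<Rightarrow> 'b::heine_borel"
  assumes "open D" "x \<in> D" "\<not> x islimpt Z" "bounded (f ` (D - Z))"
  obtains v L where "\<And>n. v n \<in> D - Z" "v \<longlonglongrightarrow> x" "(f \<circ> v) \<longlonglongrightarrow> L"
proof -
  have "x islimpt (D - Z) \<union> Z"
    by (rule islimpt_subset[OF open_imp_islimpt[OF assms(1,2)]]) blast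
  then have "x islimpt D - Z"
    using assms(3) unfolding islimpt_Un by blast
  then obtain u where u: "\<And>n. u n \<in> D - Z - {x}" "u \<longlonglongrightarrow> x"
    unfolding islimpt_sequential by blast
  have "bounded (range (f \<circ> u))"
    using u(1) by (intro bounded_subset[OF assms(4)]) auto
  then obtain L r where r: "strict_mono r" "(f \<circ> u \<circ> r) \<longlonglongrightarrow> L"
    using bounded_imp_convergent_subsequence by blast
  show ?thesis
  proof (rule that)
    show "(u \<circ> r) n \<in> D - Z" for n
      using u(1) by simp
    show "(u \<circ> r) \<longlonglongrightarrow> x"
      using LIMSEQ_subseq_LIMSEQ[OF u(2) r(1)] .
    show "(f \<circ> (u \<circ> r)) \<longlonglongrightarrow> L"
      using r(2) by (simp add: o_assoc)
  qed
qed

lemma pick_psd_on_extend_across_discrete: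
  assumes "k \<ge> 1" "open D" "D \<subseteq> ball 0 1" "\<forall>w\<in>D. \<not> w islimpt Z"
    and "pick_psd_on k (D - Z) f"
  obtains g where "pick_psd_on k D g" "\<And>w. w \<in> D - Z \<Longrightarrow> g w = f w"
proof -
  have "open (D - Z)"
    using open_Diff_no_limpt assms(2,4) by blast
  then have "norm (f w) \<le> 1" if "w \<in> D - Z" for w
    using pick_psd_on_imp_norm_le_1[OF assms(5) _ _ assms(1) that] assms(3) by blast
  then have "bounded (f ` (D - Z))"
    by (intro boundedI) auto
  then have "\<exists>v L. (\<forall>n. v n \<in> D - Z) \<and> v \<longlonglongrightarrow> w \<and> (f \<circ> v) \<longlonglongrightarrow> L" if "w \<in> D" for w
    using exists_seq_avoiding_with_convergent_image[OF assms(2) that] assms(4) that by blast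
  then obtain V L where "\<And>w. w \<in> D \<Longrightarrow>
      (\<forall>n. V w n \<in> D - Z) \<and> V w \<longlonglongrightarrow> w \<and> (f \<circ> V w) \<longlonglongrightarrow> L w"
    by metis
  then have VL: "\<And>w n. w \<in> D \<Longrightarrow> V w n \<in> D - Z"
    "\<And>w. w \<in> D \<Longrightarrow> V w \<longlonglongrightarrow> w" "\<And>w. w \<in> D \<Longrightarrow> (f \<circ> V w) \<longlonglongrightarrow> L w"
    by blast+
  define g where "g w = (if w \<in> Z then L w else f w)" for w
  have "pick_psd_on k D g"
    unfolding pick_psd_on_def
  proof (intro allI impI)
    fix z assume "inj_on z {..<k} \<and> z ` {..<k} \<subseteq> D"
    then have z: "inj_on z {..<k}" "\<And>i. i < k \<Longrightarrow> z i \<in> D"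
      by auto
    define t where "t n i = (if z i \<in> Z then V (z i) n else z i)" for n i
    have t_lim: "(\<lambda>n. t n i) \<longlonglongrightarrow> z i" if "i < k" for i
      using VL(2)[OF z(2)[OF that]] by (cases "z i \<in> Z") (simp_all add: t_def)
    have f_t_lim: "(\<lambda>n. f (t n i)) \<longlonglongrightarrow> g (z i)" if "i < k" for i
      using VL(3)[OF z(2)[OF that]] by (cases "z i \<in> Z") (simp_all add: t_def g_def o_def)
    have t_avoids: "t n i \<in> D - Z" if "i < k" for n i
      using VL(1)[OF z(2)[OF that]] z(2)[OF that] by (simp add: t_def)
    have "eventually (\<lambda>n. inj_on (t n) {..<k}) sequentially"
      using z(1) t_lim by (intro eventually_inj_on_tendsto) auto
    then have "eventually (\<lambda>n. psd_matrix k (pick_entry f (t n))) sequentially"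
      by (rule eventually_mono) (use assms(5) t_avoids in \<open>auto simp: pick_psd_on_def\<close>)
    then show "psd_matrix k (pick_entry g z)"
      using assms(3) z(2) t_lim f_t_lim by (intro psd_pick_entry_limit[OF sequentially_bot]) auto
  qed
  then show ?thesis
    using that by (auto simp: g_def)
qed

theorem proposition6p1:
  fixes k :: nat and D Z :: "complex set"
  assumes "k \<ge> 3"
    and "open D" and "D \<subseteq> ball 0 1"
    and "hindmarsh_property k D"
    and "Z \<subseteq> D" and "discrete_in Z D"
  shows "hindmarsh_property k (D - Z)"
  unfolding hindmarsh_property_iff
proof (intro allI impI)
  fix f assume "pick_psd_on k (D - Z) f"
  moreover have "\<forall>w\<in>D. \<not> w islimpt Z"
    using assms(6) by (simp add: discrete_in_def)
  moreover have "k \<ge> 1"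
    using assms(1) by simp
  ultimately obtain g where "pick_psd_on k D g" "\<And>w. w \<in> D - Z \<Longrightarrow> g w = f w"
    using pick_psd_on_extend_across_discrete assms(2,3) by blast
  moreover obtain S where "schur_function S" "\<forall>w\<in>D. S w = g w"
    using assms(4) \<open>pick_psd_on k D g\<close> unfolding hindmarsh_property_iff by blast
  ultimately show "\<exists>S. schur_function S \<and> (\<forall>w\<in>D - Z. S w = f w)"
    by auto
qed

end
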